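(* Let $n\ge 3$ and $\gamma>0$, and let $\pi$ be a random permutation of $[n]=\{1,\dots,n\}$ distributed according to the Hamming prior $p(\pi)\propto\exp(-\gamma\, d_{\mathsf{H}}(\pi,\mathrm{id}))$. Then for all integers $2\le k<n$: (i) if $\gamma\ge(1+\delta)\log n$ for some $\delta>0$, then $\mathbb{P}\big(d_{\mathsf{H}}(\pi,\mathrm{id})\ge k\big)\le\exp(-k\delta\log n)$; (ii) if $\gamma\le\log(n-k)$, then $\mathbb{P}\big(d_{\mathsf{H}}(\pi,\mathrm{id})\ge k\big)\ge c(k,n)$, where $c(k,n)$ are quantities satisfying $c(k,n)\to\frac14\,\frac{!k}{k!}$ as $n\to\infty$.
   Context: $\mathrm{id}$ is the identity permutation and $d_{\mathsf{H}}(\pi,\mathrm{id})=\sum_{i=1}^n\mathbb{I}(\pi(i)\neq i)$ is the number of non-fixed points of $\pi$. $!k$ denotes the number of derangements of $k$ elements, i.e., the number of permutations of $\{1,\dots,k\}$ without fixed points. *)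

theory Defs
  imports Complex_Main "HOL-Combinatorics.Permutations"
begin

definition hamming_id :: "nat \<Rightarrow> (nat \<Rightarrow> nat) \<Rightarrow> nat" where
  "hamming_id n \<pi> = card {i \<in> {1..n}. \<pi> i \<noteq> i}"

definition hamming_tail_prob :: "nat \<Rightarrow> real \<Rightarrow> nat \<Rightarrow> real" where
  "hamming_tail_prob n \<gamma> k =
     (\<Sum>\<pi> \<in> {\<pi>. \<pi> permutes {1..n} \<and> hamming_id n \<pi> \<ge> k}. exp (- \<gamma> * real (hamming_id n \<pi>)))
     / (\<Sum>\<pi> \<in> {\<pi>. \<pi> permutes {1..n}}. exp (- \<gamma> * real (hamming_id n \<pi>)))"

definition derangements_count :: "nat \<Rightarrow> nat" where
  "derangements_count k = card {p. p permutes {1..k} \<and> (\<forall>i \<in> {1..k}. p i \<noteq> i)}"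

end

theory Submission
  imports Defs
begin

(* Put x = exp (-gamma). Since x ^ d(pi) is the product over i of (x + (1 - x) [pi i = i]),
   expanding the product writes the Hamming prior as a mixture: a set X of [n] is chosen with
   weight x^|X| (1 - x)^(n - |X|) and pi is a permutation of X, so that d(pi) <= |X|. The sets of
   size m carry total weight w_m = C(n,m) m! x^m (1 - x)^(n - m), and w_(m+1) (1 - x) = (n - m) x w_m.
   (i) By this recursion the tail sums of (w_m) shrink by the factor n x <= n^(-delta) per step.
   (ii) If x >= 1/n and n >= 4 (k+3)^2, Bernoulli's inequality gives w_(m+k+3) >= w_m / 2 for
   m < k + 3, so the levels m >= k + 3 carry at least a third of the mass; on such a level fewer
   than a quarter of the permutations of X move fewer than k points. Hence the tail probability
   is at least 1/4 >= !k / (4 k!) for all large n. *)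

lemma sum_Pow_card:
  fixes g :: "nat \<Rightarrow> 'a::comm_semiring_1"
  assumes "finite A"
  shows "(\<Sum>X\<in>Pow A. g (card X)) = (\<Sum>m\<le>card A. of_nat (card A choose m) * g m)"
proof -
  have "(\<Sum>X\<in>Pow A. g (card X)) = (\<Sum>m\<le>card A. \<Sum>X | X \<in> Pow A \<and> card X = m. g (card X))"
    by (rule sum.group[symmetric]) (use assms in \<open>auto intro: card_mono\<close>)
  also have "\<dots> = (\<Sum>m\<le>card A. of_nat (card A choose m) * g m)"
    by (intro sum.cong refl) (simp add: n_subsets[OF assms])
  finally show ?thesis .
qed

lemma power_hamming_id_eq_sum_subsets:
  fixes x :: real
  assumes "\<pi> permutes {1..n}"
  shows "x ^ hamming_id n \<pi>
    = (\<Sum>X\<in>Pow {1..n}. x ^ card X * (1 - x) ^ (n - card X) * of_bool (\<pi> permutes X))"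
proof -
  let ?A = "{1..n}"
  have "x ^ hamming_id n \<pi> = (\<Prod>i\<in>?A. if \<pi> i \<noteq> i then x else 1)"
    unfolding hamming_id_def by (simp add: prod.inter_filter[symmetric])
  also have "\<dots> = (\<Prod>i\<in>?A. x + of_bool (\<pi> i = i) * (1 - x))"
    by (intro prod.cong) auto
  also have "\<dots> = (\<Sum>X\<in>Pow ?A. x ^ card X * (\<Prod>i\<in>?A - X. of_bool (\<pi> i = i) * (1 - x)))"
    by (simp add: prod_add)
  also have "\<dots> = (\<Sum>X\<in>Pow ?A. x ^ card X * (1 - x) ^ (n - card X) * of_bool (\<pi> permutes X))"
  proof (intro sum.cong refl)
    fix X assume X: "X \<in> Pow ?A"
    show "x ^ card X * (\<Prod>i\<in>?A - X. of_bool (\<pi> i = i) * (1 - x))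
        = x ^ card X * (1 - x) ^ (n - card X) * of_bool (\<pi> permutes X)"
    proof (cases "\<pi> permutes X")
      case True
      then have "\<forall>i\<in>?A - X. \<pi> i = i"
        by (simp add: permutes_not_in)
      with True X show ?thesis
        by (simp add: card_Diff_subset finite_subset)
    next
      case False
      then obtain i where "i \<in> ?A - X" "\<pi> i \<noteq> i"
        using permutes_superset[OF assms, of X] by auto
      then have "(\<Prod>i\<in>?A - X. of_bool (\<pi> i = i) * (1 - x)) = 0"
        by (intro prod_zero) auto
      with False show ?thesis
        by simp
    qed
  qed
  finally show ?thesis .
qed

lemma sum_power_hamming_id_eq_sum_subsets:
  fixes x :: real
  shows "(\<Sum>\<pi> | \<pi> permutes {1..n} \<and> Q \<pi>. x ^ hamming_id n \<pi>)
    = (\<Sum>X\<in>Pow {1..n}. x ^ card X * (1 - x) ^ (n - card X) * real (card {\<pi>. \<pi> permutes X \<and> Q \<pi>}))"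
proof -
  let ?S = "{\<pi>. \<pi> permutes {1..n} \<and> Q \<pi>}"
  let ?w = "\<lambda>X. x ^ card X * (1 - x) ^ (n - card X)"
  have S: "finite ?S"
    using finite_permutations[of "{1..n}"] by (rule finite_subset[rotated]) auto
  have "(\<Sum>\<pi>\<in>?S. x ^ hamming_id n \<pi>) = (\<Sum>\<pi>\<in>?S. \<Sum>X\<in>Pow {1..n}. ?w X * of_bool (\<pi> permutes X))"
    by (intro sum.cong refl) (simp add: power_hamming_id_eq_sum_subsets)
  also have "\<dots> = (\<Sum>X\<in>Pow {1..n}. ?w X * (\<Sum>\<pi>\<in>?S. of_bool (\<pi> permutes X)))"
    unfolding sum_distrib_left by (rule sum.swap)
  also have "\<dots> = (\<Sum>X\<in>Pow {1..n}. ?w X * real (card {\<pi>. \<pi> permutes X \<and> Q \<pi>}))"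
  proof (intro sum.cong refl)
    fix X assume "X \<in> Pow {1..n}"
    then have "?S \<inter> {\<pi>. \<pi> permutes X} = {\<pi>. \<pi> permutes X \<and> Q \<pi>}"
      by (auto intro: permutes_subset)
    with S show "?w X * (\<Sum>\<pi>\<in>?S. of_bool (\<pi> permutes X))
        = ?w X * real (card {\<pi>. \<pi> permutes X \<and> Q \<pi>})"
      by simp
  qed
  finally show ?thesis .
qed

definition level_weight :: "nat \<Rightarrow> real \<Rightarrow> nat \<Rightarrow> real" where
  "level_weight n x m = real (n choose m) * fact m * x ^ m * (1 - x) ^ (n - m)"

lemma level_weight_nonneg: "0 \<le> x \<Longrightarrow> x \<le> 1 \<Longrightarrow> 0 \<le> level_weight n x m"
  unfolding level_weight_def by simp

lemma sum_subsets_eq_levels: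
  "(\<Sum>X\<in>Pow {1..n}. x ^ card X * (1 - x) ^ (n - card X) * (fact (card X) * h (card X)))
    = (\<Sum>m\<le>n. level_weight n x m * h m)"
  using sum_Pow_card[of "{1..n}" "\<lambda>m. x ^ m * (1 - x) ^ (n - m) * (fact m * h m)"]
  by (simp add: level_weight_def mult_ac)

lemma sum_power_hamming_id_eq_levels:
  "(\<Sum>\<pi> | \<pi> permutes {1..n}. x ^ hamming_id n \<pi>) = (\<Sum>m\<le>n. level_weight n x m)"
proof -
  have "(\<Sum>\<pi> | \<pi> permutes {1..n}. x ^ hamming_id n \<pi>)
      = (\<Sum>X\<in>Pow {1..n}. x ^ card X * (1 - x) ^ (n - card X) * (fact (card X) * 1))"
    using sum_power_hamming_id_eq_sum_subsets[of x n "\<lambda>_. True"]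
    by (simp add: card_permutations finite_subset)
  then show ?thesis
    using sum_subsets_eq_levels[of x n "\<lambda>_. 1"] by simp
qed

lemma sum_power_hamming_id_le_levels:
  assumes "0 \<le> x" "x \<le> 1"
    and "\<And>X. X \<subseteq> {1..n} \<Longrightarrow> real (card {\<pi>. \<pi> permutes X \<and> Q \<pi>}) \<le> fact (card X) * h (card X)"
  shows "(\<Sum>\<pi> | \<pi> permutes {1..n} \<and> Q \<pi>. x ^ hamming_id n \<pi>) \<le> (\<Sum>m\<le>n. level_weight n x m * h m)"
  unfolding sum_power_hamming_id_eq_sum_subsets sum_subsets_eq_levels[symmetric]
  using assms by (intro sum_mono mult_left_mono) auto

lemma sum_power_hamming_id_ge_levels:
  assumes "0 \<le> x" "x \<le> 1"
    and "\<And>X. X \<subseteq> {1..n} \<Longrightarrow> fact (card X) * h (card X) \<le> real (card {\<pi>. \<pi> permutes X \<and> Q \<pi>})"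
  shows "(\<Sum>m\<le>n. level_weight n x m * h m) \<le> (\<Sum>\<pi> | \<pi> permutes {1..n} \<and> Q \<pi>. x ^ hamming_id n \<pi>)"
  unfolding sum_power_hamming_id_eq_sum_subsets sum_subsets_eq_levels[symmetric]
  using assms by (intro sum_mono mult_left_mono) auto

lemma sum_level_weight_pos:
  assumes "0 \<le> x"
  shows "0 < (\<Sum>m\<le>n. level_weight n x m)"
proof -
  have "id \<in> {\<pi>. \<pi> permutes {1..n}}"
    by simp
  then have "x ^ hamming_id n id \<le> (\<Sum>\<pi> | \<pi> permutes {1..n}. x ^ hamming_id n \<pi>)"
    by (rule member_le_sum) (use assms in \<open>auto simp: finite_permutations\<close>)
  then show ?thesis
    unfolding sum_power_hamming_id_eq_levels by (simp add: hamming_id_def)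
qed

lemma level_weight_Suc:
  assumes "m < n"
  shows "level_weight n x (Suc m) * (1 - x) = (real n - real m) * x * level_weight n x m"
proof -
  have "Suc m * (n choose Suc m) = (n - m) * (n choose m)"
    by (metis binomial_absorption binomial_absorb_comp)
  then have "real (Suc m) * real (n choose Suc m) = (real n - real m) * real (n choose m)"
    using assms by (metis of_nat_diff of_nat_mult less_imp_le)
  then have coeff: "real (n choose Suc m) * fact (Suc m) = (real n - real m) * (real (n choose m) * fact m)"
    by (metis fact_Suc mult.assoc mult.commute)
  have power: "(1 - x) ^ (n - Suc m) * (1 - x) = (1 - x) ^ (n - m)"
    using assms by (simp flip: power_Suc2 add: Suc_diff_Suc)
  have "level_weight n x (Suc m) * (1 - x)
      = (real (n choose Suc m) * fact (Suc m)) * x * x ^ m * ((1 - x) ^ (n - Suc m) * (1 - x))"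
    unfolding level_weight_def by (simp only: power_Suc mult_ac)
  also have "\<dots> = (real n - real m) * x * level_weight n x m"
    unfolding coeff power level_weight_def by (simp only: mult_ac)
  finally show ?thesis .
qed

lemma sum_level_weight_tail_Suc_le:
  assumes "0 \<le> x" "x \<le> 1"
  shows "(\<Sum>m=Suc j..n. level_weight n x m) \<le> (real n - real j) * x * (\<Sum>m=j..n. level_weight n x m)"
proof -
  let ?w = "level_weight n x"
  have w: "0 \<le> ?w m" for m
    using assms by (rule level_weight_nonneg)
  (* With T j the tail sum from j, shifting the recursion of level_weight_Suc gives
     (1 - x) T (j + 1) <= x ((n - j) T j - T (j + 1)). *)
  have "(\<Sum>m=Suc j..n. ?w m) * (1 - x) = (\<Sum>m=j..<n. ?w (Suc m) * (1 - x))"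
    unfolding atLeastLessThanSuc_atLeastAtMost[symmetric] sum.shift_bounds_Suc_ivl
    by (simp add: sum_distrib_right)
  also have "\<dots> = x * (\<Sum>m=j..<n. (real n - real m) * ?w m)"
    unfolding sum_distrib_left by (intro sum.cong) (simp_all add: level_weight_Suc)
  also have "\<dots> \<le> x * (\<Sum>m=j..n. (real n - real m) * ?w m)"
    using assms w by (intro mult_left_mono sum_mono2) auto
  finally have shift: "(\<Sum>m=Suc j..n. ?w m) * (1 - x) \<le> x * (\<Sum>m=j..n. (real n - real m) * ?w m)" .
  have "(\<Sum>m=Suc j..n. ?w m) = (\<Sum>m=j..n. of_bool (j < m) * ?w m)"
    by (rule sum.mono_neutral_cong_left) auto
  then have "(\<Sum>m=j..n. (real n - real m) * ?w m) + (\<Sum>m=Suc j..n. ?w m)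
      = (\<Sum>m=j..n. (real n - real m + of_bool (j < m)) * ?w m)"
    by (simp only: sum.distrib[symmetric] distrib_right)
  also have "\<dots> \<le> (\<Sum>m=j..n. (real n - real j) * ?w m)"
    using w by (intro sum_mono mult_right_mono) auto
  finally have count: "(\<Sum>m=j..n. (real n - real m) * ?w m) + (\<Sum>m=Suc j..n. ?w m)
      \<le> (real n - real j) * (\<Sum>m=j..n. ?w m)"
    by (simp add: sum_distrib_left)
  have "(\<Sum>m=Suc j..n. ?w m) \<le> x * ((\<Sum>m=j..n. (real n - real m) * ?w m) + (\<Sum>m=Suc j..n. ?w m))"
    using shift by (simp add: algebra_simps)
  also have "\<dots> \<le> (real n - real j) * x * (\<Sum>m=j..n. ?w m)"
    using mult_left_mono[OF count assms(1)] by (simp add: mult_ac)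
  finally show ?thesis .
qed

lemma sum_level_weight_tail_le_power:
  assumes "0 \<le> x" "x \<le> 1"
  shows "(\<Sum>m=k..n. level_weight n x m) \<le> (real n * x) ^ k * (\<Sum>m\<le>n. level_weight n x m)"
proof (induction k)
  case 0
  show ?case by (simp add: atLeast0AtMost)
next
  case (Suc k)
  have "(\<Sum>m=Suc k..n. level_weight n x m) \<le> (real n - real k) * x * (\<Sum>m=k..n. level_weight n x m)"
    using assms by (rule sum_level_weight_tail_Suc_le)
  also have "\<dots> \<le> real n * x * (\<Sum>m=k..n. level_weight n x m)"
    using assms by (intro mult_right_mono sum_nonneg level_weight_nonneg) auto
  also have "\<dots> \<le> real n * x * ((real n * x) ^ k * (\<Sum>m\<le>n. level_weight n x m))"
    using assms Suc.IH by (intro mult_left_mono) auto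
  finally show ?case by (simp add: mult_ac)
qed

lemma level_weight_shift_ge:
  assumes "0 \<le> x" "x \<le> 1" "m + j \<le> l" "l \<le> n"
  shows "level_weight n x m * ((real n - real l) * x) ^ j \<le> level_weight n x (m + j)"
  using assms(3)
proof (induction j)
  case 0
  show ?case by simp
next
  case (Suc j)
  let ?q = "(real n - real l) * x"
  have "level_weight n x m * ?q ^ Suc j = ?q * (level_weight n x m * ?q ^ j)"
    by (simp only: power_Suc mult_ac)
  also have "\<dots> \<le> ?q * level_weight n x (m + j)"
    using Suc assms by (intro mult_left_mono) auto
  also have "\<dots> \<le> (real n - real (m + j)) * x * level_weight n x (m + j)"
    using Suc.prems assms by (intro mult_right_mono level_weight_nonneg) auto
  also have "\<dots> = level_weight n x (Suc (m + j)) * (1 - x)"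
    using Suc.prems assms by (simp add: level_weight_Suc)
  also have "\<dots> \<le> level_weight n x (Suc (m + j))"
    using assms by (simp add: mult_left_le level_weight_nonneg)
  finally show ?case by simp
qed

lemma half_le_power_shift_ratio:
  assumes "1 / real n \<le> x" "4 * l ^ 2 \<le> n"
  shows "1 / 2 \<le> ((real n - real (2 * l)) * x) ^ l"
proof (cases "l = 0")
  case False
  have "2 * l \<le> 4 * l ^ 2"
    using le_square[of l] by (simp add: power2_eq_square)
  with assms(2) have l_le: "2 * l \<le> n"
    by linarith
  with False have n: "0 < real n"
    by simp
  have "4 * real l ^ 2 \<le> real n"
    using assms(2) by (metis of_nat_le_iff of_nat_mult of_nat_numeral of_nat_power)
  then have "1 / 2 \<le> 1 + real l * (- (2 * real l / real n))"
    using n by (simp add: field_simps power2_eq_square)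
  also have "\<dots> \<le> (1 + - (2 * real l / real n)) ^ l"
    using l_le n by (intro Bernoulli_inequality) (simp add: field_simps)
  also have "\<dots> \<le> ((real n - real (2 * l)) * x) ^ l"
  proof (rule power_mono)
    show "0 \<le> 1 + - (2 * real l / real n)"
      using l_le n by (simp add: field_simps)
    have "1 + - (2 * real l / real n) = (real n - real (2 * l)) * (1 / real n)"
      using n by (simp add: field_simps)
    also have "\<dots> \<le> (real n - real (2 * l)) * x"
      using l_le assms(1) by (intro mult_left_mono) auto
    finally show "1 + - (2 * real l / real n) \<le> (real n - real (2 * l)) * x" .
  qed
  finally show ?thesis .
qed simp

lemma sum_level_weight_head_le_twice_tail:
  assumes "1 / real n \<le> x" "x \<le> 1" "4 * l ^ 2 \<le> n"
  shows "(\<Sum>m<l. level_weight n x m) \<le> 2 * (\<Sum>m=l..n. level_weight n x m)"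
proof -
  let ?w = "level_weight n x"
  let ?q = "(real n - real (2 * l)) * x"
  have x: "0 \<le> x"
    using assms(1) by (rule order_trans[rotated]) simp
  have "2 * l \<le> 4 * l ^ 2"
    using le_square[of l] by (simp add: power2_eq_square)
  with assms(3) have l_le: "2 * l \<le> n"
    by linarith
  have "(\<Sum>m<l. ?w m) \<le> (\<Sum>m<l. 2 * ?w (m + l))"
  proof (rule sum_mono)
    fix m assume "m \<in> {..<l}"
    then have "?w m * ?q ^ l \<le> ?w (m + l)"
      using x assms(2) l_le by (intro level_weight_shift_ge) auto
    moreover have "?w m * (1 / 2) \<le> ?w m * ?q ^ l"
      using half_le_power_shift_ratio[OF assms(1,3)] level_weight_nonneg[OF x assms(2)]
      by (rule mult_left_mono)
    ultimately show "?w m \<le> 2 * ?w (m + l)"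
      by linarith
  qed
  also have "\<dots> = 2 * (\<Sum>m=0+l..<l+l. ?w m)"
    unfolding sum.shift_bounds_nat_ivl by (simp add: sum_distrib_left lessThan_atLeast0)
  also have "\<dots> \<le> 2 * (\<Sum>m=l..n. ?w m)"
    using l_le level_weight_nonneg[OF x assms(2)] by (intro mult_left_mono sum_mono2) auto
  finally show ?thesis .
qed

lemma hamming_id_le_card:
  assumes "\<pi> permutes X" "finite X"
  shows "hamming_id n \<pi> \<le> card X"
  unfolding hamming_id_def using assms by (intro card_mono) (auto dest: permutes_not_in)

lemma card_permutes_hamming_id_ge_le_fact:
  assumes "finite X"
  shows "card {\<pi>. \<pi> permutes X \<and> k \<le> hamming_id n \<pi>} \<le> of_bool (k \<le> card X) * fact (card X)"
proof (cases "k \<le> card X")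
  case True
  have "card {\<pi>. \<pi> permutes X \<and> k \<le> hamming_id n \<pi>} \<le> card {\<pi>. \<pi> permutes X}"
    using assms by (intro card_mono) (auto simp: finite_permutations)
  with True assms show ?thesis
    by (simp add: card_permutations)
next
  case False
  then have empty: "{\<pi>. \<pi> permutes X \<and> k \<le> hamming_id n \<pi>} = {}"
    using hamming_id_le_card[OF _ assms, of _ n] by fastforce
  show ?thesis
    by (simp only: empty card.empty)
qed

lemma card_permutes_hamming_id_le_mult_fact:
  assumes X: "X \<subseteq> {1..n}" and j: "j \<le> card X"
  shows "card {\<pi>. \<pi> permutes X \<and> hamming_id n \<pi> \<le> j} * fact (card X - j) \<le> fact (card X)"
proof -
  have fin: "finite X"
    using X finite_subset by blast
  let ?K = "{B. B \<subseteq> X \<and> card B = j}"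
  have cover: "{\<pi>. \<pi> permutes X \<and> hamming_id n \<pi> \<le> j} \<subseteq> (\<Union>B\<in>?K. {\<pi>. \<pi> permutes B})"
  proof safe
    fix \<pi> assume \<pi>: "\<pi> permutes X" "hamming_id n \<pi> \<le> j"
    let ?M = "{i\<in>{1..n}. \<pi> i \<noteq> i}"
    have "?M \<subseteq> X"
      using permutes_not_in[OF \<pi>(1)] by auto
    moreover have "card ?M \<le> j"
      using \<pi>(2) unfolding hamming_id_def .
    ultimately obtain B where B: "?M \<subseteq> B" "B \<subseteq> X" "card B = j"
      using exists_subset_between[OF _ j _ fin] by blast
    have "\<pi> permutes B"
    proof (rule permutes_superset[OF \<pi>(1)])
      fix i assume "i \<in> X - B"
      with X B(1) show "\<pi> i = i"
        by blast
    qed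
    with B show "\<pi> \<in> (\<Union>B\<in>?K. {\<pi>. \<pi> permutes B})"
      by auto
  qed
  have K: "finite ?K"
    using fin by simp
  have "card {\<pi>. \<pi> permutes X \<and> hamming_id n \<pi> \<le> j} \<le> card (\<Union>B\<in>?K. {\<pi>. \<pi> permutes B})"
    using cover by (rule card_mono[rotated])
      (use K fin in \<open>auto intro!: finite_permutations intro: finite_subset\<close>)
  also have "\<dots> \<le> (\<Sum>B\<in>?K. card {\<pi>. \<pi> permutes B})"
    using K by (rule card_UN_le)
  also have "\<dots> = (\<Sum>B\<in>?K. fact j)"
    by (intro sum.cong refl) (auto simp: card_permutations finite_subset[OF _ fin])
  also have "\<dots> = (card X choose j) * fact j"
    using n_subsets[OF fin] by simp
  finally have "card {\<pi>. \<pi> permutes X \<and> hamming_id n \<pi> \<le> j} * fact (card X - j)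
      \<le> (card X choose j) * fact j * fact (card X - j)"
    by (rule mult_le_mono1)
  also have "\<dots> = fact (card X)"
    using binomial_fact_lemma[OF j] by (simp add: mult_ac)
  finally show ?thesis .
qed

lemma card_permutes_hamming_id_ge_three_quarters:
  assumes X: "X \<subseteq> {1..n}" and k: "k + 3 \<le> card X"
  shows "3 * fact (card X) \<le> 4 * card {\<pi>. \<pi> permutes X \<and> k \<le> hamming_id n \<pi>}"
proof -
  have fin: "finite X"
    using X finite_subset by blast
  let ?many = "{\<pi>. \<pi> permutes X \<and> k \<le> hamming_id n \<pi>}"
  let ?few = "{\<pi>. \<pi> permutes X \<and> hamming_id n \<pi> < k}"
  have "card ?many + card ?few = card {\<pi>. \<pi> permutes X}"
    using fin by (subst card_Un_disjoint[symmetric]) (auto intro: arg_cong[where f = card] finite_permutations)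
  then have total: "card ?many + card ?few = fact (card X)"
    using fin by (simp add: card_permutations)
  have "4 * card ?few \<le> fact (card X - k) * card {\<pi>. \<pi> permutes X \<and> hamming_id n \<pi> \<le> k}"
  proof (rule mult_le_mono)
    have "fact 3 \<le> (fact (card X - k) :: nat)"
      using k by (intro fact_mono) auto
    then show "4 \<le> (fact (card X - k) :: nat)"
      by (simp add: eval_nat_numeral)
    show "card ?few \<le> card {\<pi>. \<pi> permutes X \<and> hamming_id n \<pi> \<le> k}"
      using fin by (intro card_mono) (auto simp: finite_permutations)
  qed
  also have "\<dots> \<le> fact (card X)"
    using card_permutes_hamming_id_le_mult_fact[OF X] k by (simp add: mult.commute)
  finally show ?thesis
    using total by linarith
qed

lemma hamming_tail_prob_eq:
  "hamming_tail_prob n \<gamma> k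
    = (\<Sum>\<pi> | \<pi> permutes {1..n} \<and> k \<le> hamming_id n \<pi>. exp (- \<gamma>) ^ hamming_id n \<pi>)
      / (\<Sum>m\<le>n. level_weight n (exp (- \<gamma>)) m)"
  unfolding hamming_tail_prob_def sum_power_hamming_id_eq_levels[symmetric]
  by (simp add: exp_of_nat_mult[symmetric] mult.commute)

lemma hamming_tail_prob_nonneg: "0 \<le> hamming_tail_prob n \<gamma> k"
  unfolding hamming_tail_prob_def by (intro divide_nonneg_nonneg sum_nonneg) auto

lemma sum_power_hamming_id_tail_le_levels:
  assumes "0 \<le> x" "x \<le> 1"
  shows "(\<Sum>\<pi> | \<pi> permutes {1..n} \<and> k \<le> hamming_id n \<pi>. x ^ hamming_id n \<pi>)
    \<le> (\<Sum>m=k..n. level_weight n x m)"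
proof -
  have "(\<Sum>\<pi> | \<pi> permutes {1..n} \<and> k \<le> hamming_id n \<pi>. x ^ hamming_id n \<pi>)
      \<le> (\<Sum>m\<le>n. level_weight n x m * of_bool (k \<le> m))"
  proof (rule sum_power_hamming_id_le_levels[OF assms])
    fix X :: "nat set" assume "X \<subseteq> {1..n}"
    then have "card {\<pi>. \<pi> permutes X \<and> k \<le> hamming_id n \<pi>} \<le> of_bool (k \<le> card X) * fact (card X)"
      by (intro card_permutes_hamming_id_ge_le_fact) (rule finite_subset, auto)
    then have "real (card {\<pi>. \<pi> permutes X \<and> k \<le> hamming_id n \<pi>})
        \<le> real (of_bool (k \<le> card X) * fact (card X))"
      by (simp only: of_nat_le_iff)
    then show "real (card {\<pi>. \<pi> permutes X \<and> k \<le> hamming_id n \<pi>})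
        \<le> fact (card X) * of_bool (k \<le> card X)"
      by (simp add: mult.commute)
  qed
  also have "\<dots> = (\<Sum>m=k..n. level_weight n x m)"
    by (simp add: atLeastAtMost_def atLeast_def Int_commute)
  finally show ?thesis .
qed

lemma sum_power_hamming_id_tail_ge_levels:
  assumes "0 \<le> x" "x \<le> 1"
  shows "3 / 4 * (\<Sum>m=k+3..n. level_weight n x m)
    \<le> (\<Sum>\<pi> | \<pi> permutes {1..n} \<and> k \<le> hamming_id n \<pi>. x ^ hamming_id n \<pi>)"
proof -
  have "(\<Sum>m=k+3..n. level_weight n x m) = (\<Sum>m\<le>n. level_weight n x m * of_bool (k + 3 \<le> m))"
    by (simp add: atLeastAtMost_def atLeast_def Int_commute)
  then have "3 / 4 * (\<Sum>m=k+3..n. level_weight n x m)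
      = (\<Sum>m\<le>n. level_weight n x m * (3 / 4 * of_bool (k + 3 \<le> m)))"
    by (simp only: sum_distrib_left mult_ac)
  also have "\<dots> \<le> (\<Sum>\<pi> | \<pi> permutes {1..n} \<and> k \<le> hamming_id n \<pi>. x ^ hamming_id n \<pi>)"
  proof (rule sum_power_hamming_id_ge_levels[OF assms])
    fix X :: "nat set" assume X: "X \<subseteq> {1..n}"
    show "fact (card X) * (3 / 4 * of_bool (k + 3 \<le> card X))
        \<le> real (card {\<pi>. \<pi> permutes X \<and> k \<le> hamming_id n \<pi>})"
    proof (cases "k + 3 \<le> card X")
      case True
      then have "real (3 * fact (card X)) \<le> real (4 * card {\<pi>. \<pi> permutes X \<and> k \<le> hamming_id n \<pi>})"
        using card_permutes_hamming_id_ge_three_quarters[OF X] by (simp only: of_nat_le_iff)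
      with True show ?thesis
        by simp
    qed simp
  qed
  finally show ?thesis .
qed

lemma hamming_tail_prob_le_power:
  assumes "0 \<le> \<gamma>"
  shows "hamming_tail_prob n \<gamma> k \<le> (real n * exp (- \<gamma>)) ^ k"
proof -
  define x where "x = exp (- \<gamma>)"
  have x: "0 \<le> x" "x \<le> 1"
    using assms by (auto simp: x_def)
  define Z where "Z = (\<Sum>m\<le>n. level_weight n x m)"
  have "(\<Sum>\<pi> | \<pi> permutes {1..n} \<and> k \<le> hamming_id n \<pi>. x ^ hamming_id n \<pi>)
      \<le> (\<Sum>m=k..n. level_weight n x m)"
    using x by (rule sum_power_hamming_id_tail_le_levels)
  also have "\<dots> \<le> (real n * x) ^ k * Z"
    unfolding Z_def using x by (rule sum_level_weight_tail_le_power)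
  finally show ?thesis
    using sum_level_weight_pos[OF x(1), of n]
    unfolding hamming_tail_prob_eq x_def[symmetric] Z_def[symmetric] by (simp add: divide_le_eq)
qed

lemma hamming_tail_prob_ge_quarter:
  assumes "0 \<le> \<gamma>" "\<gamma> \<le> ln (real n)" "4 * (k + 3) ^ 2 \<le> n"
  shows "1 / 4 \<le> hamming_tail_prob n \<gamma> k"
proof -
  define x where "x = exp (- \<gamma>)"
  have x: "0 \<le> x" "x \<le> 1"
    using assms(1) by (auto simp: x_def)
  have "k + 3 \<le> 4 * (k + 3) ^ 2"
    by (simp add: power2_eq_square)
  with assms(3) have n: "k + 3 \<le> n"
    by linarith
  then have "1 / real n = exp (- ln (real n))"
    by (simp add: exp_minus inverse_eq_divide)
  also have "\<dots> \<le> x"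
    unfolding x_def using assms(2) by simp
  finally have x_ge: "1 / real n \<le> x" .
  define R where "R = (\<Sum>m=k+3..n. level_weight n x m)"
  define Z where "Z = (\<Sum>m\<le>n. level_weight n x m)"
  define N where "N = (\<Sum>\<pi> | \<pi> permutes {1..n} \<and> k \<le> hamming_id n \<pi>. x ^ hamming_id n \<pi>)"
  have "{..n} = {..<k+3} \<union> {k+3..n}"
    using n by auto
  then have "Z = (\<Sum>m<k+3. level_weight n x m) + R"
    unfolding Z_def R_def by (simp only:) (rule sum.union_disjoint, auto)
  also have "\<dots> \<le> 3 * R"
    using sum_level_weight_head_le_twice_tail[OF x_ge x(2) assms(3)] unfolding R_def by linarith
  also have "\<dots> \<le> 4 * N"
    using sum_power_hamming_id_tail_ge_levels[OF x, of n k] unfolding R_def N_def by linarith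
  finally have "Z \<le> 4 * N" .
  moreover have "0 < Z"
    unfolding Z_def using x(1) by (rule sum_level_weight_pos)
  ultimately show ?thesis
    unfolding hamming_tail_prob_eq x_def[symmetric] Z_def[symmetric] N_def[symmetric]
    by (simp add: field_simps)
qed

lemma derangements_count_le_fact: "real (derangements_count k) \<le> fact k"
proof -
  have "derangements_count k \<le> card {p. p permutes {1..k}}"
    unfolding derangements_count_def by (intro card_mono) (auto intro: finite_permutations)
  then have "derangements_count k \<le> fact k"
    by (simp add: card_permutations)
  then show ?thesis
    by (metis of_nat_fact of_nat_le_iff)
qed

lemma hamming_tail_prob_le_exp:
  assumes "0 < n" "0 \<le> \<gamma>" "(1 + \<delta>) * ln (real n) \<le> \<gamma>"
  shows "hamming_tail_prob n \<gamma> k \<le> exp (- real k * \<delta> * ln (real n))"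
proof -
  have "real n * exp (- \<gamma>) = exp (ln (real n) - \<gamma>)"
    using assms(1) by (simp add: exp_diff exp_minus field_simps)
  also have "\<dots> \<le> exp (- \<delta> * ln (real n))"
    using assms(3) by (simp add: algebra_simps)
  finally have "(real n * exp (- \<gamma>)) ^ k \<le> exp (- \<delta> * ln (real n)) ^ k"
    by (intro power_mono) auto
  also have "\<dots> = exp (- real k * \<delta> * ln (real n))"
    by (simp flip: exp_of_nat_mult)
  finally show ?thesis
    using hamming_tail_prob_le_power[OF assms(2), of n k] by linarith
qed

definition tail_lower_bound :: "nat \<Rightarrow> nat \<Rightarrow> real" where
  "tail_lower_bound k n =
    (if 4 * (k + 3) ^ 2 \<le> n then 1 / 4 * (real (derangements_count k) / fact k) else 0)"

lemma tail_lower_bound_tendsto: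
  "(\<lambda>n. tail_lower_bound k n) \<longlonglongrightarrow> 1 / 4 * (real (derangements_count k) / fact k)"
  by (rule tendsto_eventually) (auto simp: tail_lower_bound_def eventually_sequentially)

lemma hamming_tail_prob_ge_tail_lower_bound:
  assumes "0 \<le> \<gamma>" "\<gamma> \<le> ln (real n)"
  shows "tail_lower_bound k n \<le> hamming_tail_prob n \<gamma> k"
proof (cases "4 * (k + 3) ^ 2 \<le> n")
  case True
  then have "tail_lower_bound k n \<le> 1 / 4"
    using derangements_count_le_fact[of k] by (simp add: tail_lower_bound_def)
  also have "\<dots> \<le> hamming_tail_prob n \<gamma> k"
    using assms True by (rule hamming_tail_prob_ge_quarter)
  finally show ?thesis .
qed (simp add: tail_lower_bound_def hamming_tail_prob_nonneg)

theorem proposition1: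
  shows "(\<forall>n k \<gamma> \<delta>. n \<ge> 3 \<longrightarrow> 2 \<le> k \<longrightarrow> k < n \<longrightarrow> \<gamma> > 0 \<longrightarrow> \<delta> > 0 \<longrightarrow>
            \<gamma> \<ge> (1 + \<delta>) * ln (real n) \<longrightarrow>
            hamming_tail_prob n \<gamma> k \<le> exp (- real k * \<delta> * ln (real n)))
   \<and> (\<exists>c :: nat \<Rightarrow> nat \<Rightarrow> real.
        (\<forall>k \<ge> 2. (\<lambda>n. c k n) \<longlonglongrightarrow> (1/4) * (real (derangements_count k) / fact k))
      \<and> (\<forall>n k \<gamma>. n \<ge> 3 \<longrightarrow> 2 \<le> k \<longrightarrow> k < n \<longrightarrow> \<gamma> > 0 \<longrightarrow>
            \<gamma> \<le> ln (real (n - k)) \<longrightarrow> hamming_tail_prob n \<gamma> k \<ge> c k n))"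
proof (intro conjI allI impI exI[of _ tail_lower_bound])
  fix n k :: nat and \<gamma> \<delta> :: real
  assume "n \<ge> 3" "\<gamma> > 0" "\<gamma> \<ge> (1 + \<delta>) * ln (real n)"
  then show "hamming_tail_prob n \<gamma> k \<le> exp (- real k * \<delta> * ln (real n))"
    by (intro hamming_tail_prob_le_exp) auto
next
  fix k :: nat
  show "(\<lambda>n. tail_lower_bound k n) \<longlonglongrightarrow> 1 / 4 * (real (derangements_count k) / fact k)"
    by (rule tail_lower_bound_tendsto)
next
  fix n k :: nat and \<gamma> :: real
  assume "k < n" "\<gamma> > 0" "\<gamma> \<le> ln (real (n - k))"
  moreover have "ln (real (n - k)) \<le> ln (real n)"
    using \<open>k < n\<close> by simp
  ultimately show "tail_lower_bound k n \<le> hamming_tail_prob n \<gamma> k"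
    by (intro hamming_tail_prob_ge_tail_lower_bound) linarith+
qed

end
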